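(* Let $\kappa>0$ and $0<\alpha\le2$, and let $d_{\kappa,\alpha}(p,q)=\|p^{-1}\cdot q\|_{\kappa,\alpha}$ where $\|(x,y,z)\|_{\kappa,\alpha}=\kappa\sqrt{x^2+y^2}+\big((x^2+y^2)^2+4\alpha^2z^2\big)^{1/4}$. Then BCP does not hold for $d_{\kappa,\alpha}$ on $\mathbb H$.
   Context: $\mathbb H=\mathbb R^3$ with group law $(x,y,z)\cdot(x',y',z')=(x+x',y+y',z+z'+\tfrac12(xy'-yx'))$. BCP holds for $d$ if there is $N\geq1$ such that for every bounded $A$ and every family $\mathcal B$ of closed balls with each point of $A$ the center of some ball of $\mathcal B$, some subfamily $\mathcal F\subset\mathcal B$ satisfies $\chi_A\le\sum_{B\in\mathcal F}\chi_B\le N$. *)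

theory Defs
  imports "HOL-Analysis.Analysis"
begin

type_synonym heis = "real \<times> real \<times> real"

definition heis_mult :: "heis \<Rightarrow> heis \<Rightarrow> heis" where
  "heis_mult p q = (case p of (x, y, z) \<Rightarrow> case q of (x', y', z') \<Rightarrow>
      (x + x', y + y', z + z' + (1/2) * (x * y' - y * x')))"

definition heis_inv :: "heis \<Rightarrow> heis" where
  "heis_inv p = (case p of (x, y, z) \<Rightarrow> (-x, -y, -z))"

definition ka_norm :: "real \<Rightarrow> real \<Rightarrow> heis \<Rightarrow> real" where
  "ka_norm \<kappa> \<alpha> p = (case p of (x, y, z) \<Rightarrow>
      \<kappa> * sqrt (x^2 + y^2) + root 4 ((x^2 + y^2)^2 + 4 * \<alpha>^2 * z^2))"

definition ka_dist :: "real \<Rightarrow> real \<Rightarrow> heis \<Rightarrow> heis \<Rightarrow> real" where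
  "ka_dist \<kappa> \<alpha> p q = ka_norm \<kappa> \<alpha> (heis_mult (heis_inv p) q)"

definition dcball :: "('a \<Rightarrow> 'a \<Rightarrow> real) \<Rightarrow> 'a \<Rightarrow> real \<Rightarrow> 'a set" where
  "dcball d c r = {p. d c p \<le> r}"

definition dbounded :: "('a \<Rightarrow> 'a \<Rightarrow> real) \<Rightarrow> 'a set \<Rightarrow> bool" where
  "dbounded d A \<longleftrightarrow> (\<exists>c R. A \<subseteq> dcball d c R)"

text \<open>The pointwise sum of indicator functions
  of the balls in F is the number of balls of F containing the point, so
  chi_A \<le> sum \<le> N means: every point of A lies in some ball of F, and every
  point lies in at most N (in particular finitely many) balls of F.\<close>
definition BCP :: "('a \<Rightarrow> 'a \<Rightarrow> real) \<Rightarrow> bool" where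
  "BCP d \<longleftrightarrow> (\<exists>N::nat. N \<ge> 1 \<and>
     (\<forall>A \<B>. dbounded d A
        \<longrightarrow> (\<forall>B\<in>\<B>. \<exists>c r. r > 0 \<and> B = dcball d c r)
        \<longrightarrow> (\<forall>a\<in>A. \<exists>r>0. dcball d a r \<in> \<B>)
        \<longrightarrow> (\<exists>\<F>\<subseteq>\<B>. (\<forall>p\<in>A. \<exists>B\<in>\<F>. p \<in> B) \<and>
               (\<forall>p. finite {B\<in>\<F>. p \<in> B} \<and> card {B\<in>\<F>. p \<in> B} \<le> N))))"

end

theory Submission
  imports Defs
begin

(* Abstractly, BCP fails for
   any distance function admitting infinitely many balls B(c_i, r_i) that all
   contain one common point while no ball contains the centre of another: a
   subfamily covering n of the centres must use all n of those balls, so the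
   common point lies in n of them, for every n.

   Concretely, we place centres in the xz-plane, c_i = (x_i, 0, a_i^2/(2 alpha)),
   with x_i decaying geometrically and heights a_i growing very fast, and take
   r_i = d(c_i, 0), so the origin is the common point.  On the xz-plane the
   distance is squeezed between kappa|x'-x| + sqrt|a'^2-a^2| and the same
   expression with kappa+1 in place of kappa; this makes a higher centre far
   from the ball of a lower one (the vertical gap dominates), and a lower
   centre outside the ball of a higher one (the horizontal term kappa x_i beats
   the small vertical saving a_j - sqrt(a_j^2 - a_i^2) <= a_i^2/a_j). *)

lemma finite_dbounded:
  assumes "finite A"
  shows "dbounded d A"
proof -
  fix c
  define R where "R = Max (insert 0 (d c ` A))"
  have "A \<subseteq> dcball d c R"
    using assms unfolding dcball_def R_def by auto
  then show ?thesis unfolding dbounded_def by blast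
qed

lemma not_BCP_if_separated_balls:
  fixes d :: "'a \<Rightarrow> 'a \<Rightarrow> real" and c :: "nat \<Rightarrow> 'a" and r :: "nat \<Rightarrow> real"
  assumes pos: "\<And>i. r i > 0"
    and common: "\<And>i. d (c i) p\<^sub>0 \<le> r i"
    and separated: "\<And>i j. i \<noteq> j \<Longrightarrow> d (c i) (c j) > r i"
  shows "\<not> BCP d"
proof
  assume "BCP d"
  then obtain N :: nat where N: "\<And>A \<B>. dbounded d A
        \<Longrightarrow> (\<forall>B\<in>\<B>. \<exists>c r. r > 0 \<and> B = dcball d c r)
        \<Longrightarrow> (\<forall>a\<in>A. \<exists>r>0. dcball d a r \<in> \<B>)
        \<Longrightarrow> (\<exists>\<F>\<subseteq>\<B>. (\<forall>p\<in>A. \<exists>B\<in>\<F>. p \<in> B) \<and>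
               (\<forall>p. finite {B\<in>\<F>. p \<in> B} \<and> card {B\<in>\<F>. p \<in> B} \<le> N))"
    unfolding BCP_def by blast
  define ball where "ball i = dcball d (c i) (r i)" for i
  define n where "n = Suc N"
  have c_notin: "c j \<notin> ball i" if "i \<noteq> j" for i j
    using separated[OF that] unfolding ball_def dcball_def by auto
  obtain \<F> where F: "\<F> \<subseteq> ball ` {..<n}" "\<forall>p\<in>c ` {..<n}. \<exists>B\<in>\<F>. p \<in> B"
      "finite {B\<in>\<F>. p\<^sub>0 \<in> B}" "card {B\<in>\<F>. p\<^sub>0 \<in> B} \<le> N"
    using N[of "c ` {..<n}" "ball ` {..<n}"] finite_dbounded[of "c ` {..<n}"] pos
    unfolding ball_def by fastforce
  (* c_i lies in no other ball, so the cover must use the ball around c_i itself *)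
  have chosen: "ball i \<in> \<F> \<and> c i \<in> ball i" if "i < n" for i
  proof -
    obtain B where B: "B \<in> \<F>" "c i \<in> B" using F(2) \<open>i < n\<close> by blast
    then obtain j where "B = ball j" using F(1) by blast
    with B c_notin have "j = i" by blast
    with B \<open>B = ball j\<close> show ?thesis by simp
  qed
  have "inj_on ball {..<n}"
    using chosen c_notin by (intro inj_onI) (metis lessThan_iff)
  then have "n = card (ball ` {..<n})" by (simp add: card_image)
  also have "\<dots> \<le> card {B\<in>\<F>. p\<^sub>0 \<in> B}"
    using chosen common F(3) by (intro card_mono) (auto simp: ball_def dcball_def)
  finally show False using F(4) n_def by simp
qed

lemma root4_bounds:
  fixes s w :: real
  assumes "0 \<le> s" "0 \<le> w"
  shows "w \<le> root 4 (s^4 + w^4)" "root 4 (s^4 + w^4) \<le> s + w"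
proof -
  have "root 4 (w^4) \<le> root 4 (s^4 + w^4)" by simp
  then show "w \<le> root 4 (s^4 + w^4)" using assms by (simp add: real_root_power_cancel)
  have "s^4 + w^4 \<le> (s + w)^4"
    using assms by (simp add: power4_eq_xxxx algebra_simps)
  then have "root 4 (s^4 + w^4) \<le> root 4 ((s + w)^4)" by simp
  then show "root 4 (s^4 + w^4) \<le> s + w" using assms by (simp add: real_root_power_cancel)
qed

(* Points of the xz-plane, with the height z parametrised so that the
   vertical part of the norm becomes a square: 4 alpha^2 z^2 = a^4.
   In particular xz_point alpha 0 0 is the origin. *)
definition xz_point :: "real \<Rightarrow> real \<Rightarrow> real \<Rightarrow> heis" where
  "xz_point \<alpha> x a = (x, 0, a^2 / (2*\<alpha>))"

(* On the xz-plane the group law is just addition, and the distance reads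
   kappa |x'-x| + (|x'-x|^4 + w^4)^(1/4) with w = sqrt |a'^2 - a^2|. *)
lemma ka_dist_xz_point:
  assumes "\<alpha> > 0"
  shows "ka_dist \<kappa> \<alpha> (xz_point \<alpha> x a) (xz_point \<alpha> x' a')
       = \<kappa> * \<bar>x' - x\<bar> + root 4 (\<bar>x' - x\<bar>^4 + (sqrt \<bar>a'^2 - a^2\<bar>)^4)"
proof -
  have "(sqrt \<bar>a'^2 - a^2\<bar>)^4 = ((sqrt \<bar>a'^2 - a^2\<bar>)^2)^2"
    by (simp only: power_mult[symmetric]) simp
  also have "\<dots> = 4 * \<alpha>^2 * (a'^2 / (2*\<alpha>) - a^2 / (2*\<alpha>))^2"
    using assms by (simp add: power2_eq_square field_simps)
  finally have "(sqrt \<bar>a'^2 - a^2\<bar>)^4 = 4 * \<alpha>^2 * (a'^2 / (2*\<alpha>) - a^2 / (2*\<alpha>))^2" .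
  then show ?thesis
    by (simp add: ka_dist_def ka_norm_def heis_mult_def heis_inv_def xz_point_def
        flip: power_mult)
qed

lemma ka_dist_xz_point_bounds:
  fixes \<kappa> \<alpha> x a x' a' :: real
  assumes "\<kappa> \<ge> 0" "\<alpha> > 0"
  defines "D \<equiv> ka_dist \<kappa> \<alpha> (xz_point \<alpha> x a) (xz_point \<alpha> x' a')"
  shows "\<kappa> * \<bar>x' - x\<bar> + sqrt \<bar>a'^2 - a^2\<bar> \<le> D"
    and "D \<le> (\<kappa> + 1) * \<bar>x' - x\<bar> + sqrt \<bar>a'^2 - a^2\<bar>"
  using root4_bounds[of "\<bar>x' - x\<bar>" "sqrt \<bar>a'^2 - a^2\<bar>"]
  unfolding D_def ka_dist_xz_point[OF assms(2)] by (auto simp: algebra_simps)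

lemma sqrt_diff_squares_bounds:
  fixes b c :: real
  assumes "0 \<le> b" "b \<le> c"
  shows "c - b \<le> sqrt (c^2 - b^2)" and "c * (c - sqrt (c^2 - b^2)) \<le> b^2"
proof -
  define w where "w = sqrt (c^2 - b^2)"
  have b2: "b^2 \<le> c^2" using assms by (simp add: power_mono)
  have "b * b \<le> b * c" using assms by (simp add: mult_left_mono)
  then have "(c - b)^2 \<le> c^2 - b^2" by (simp add: power2_eq_square algebra_simps)
  then show "c - b \<le> sqrt (c^2 - b^2)" by (simp add: real_le_rsqrt)
  have w: "0 \<le> w" "w \<le> c" "w^2 = c^2 - b^2"
    using assms b2 real_sqrt_le_mono[of "c^2 - b^2" "c^2"] by (auto simp: w_def)
  have "c * (c - w) \<le> (c + w) * (c - w)" using w by (intro mult_right_mono) auto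
  also have "\<dots> = b^2" using w(3) by (simp add: power2_eq_square algebra_simps)
  finally show "c * (c - sqrt (c^2 - b^2)) \<le> b^2" unfolding w_def .
qed

lemma higher_centre_outside:
  assumes "\<kappa> \<ge> 0" "\<alpha> > 0" "0 \<le> x" "x \<le> 1" "0 \<le> a" "2 * a + \<kappa> + 1 < a'"
  shows "ka_dist \<kappa> \<alpha> (xz_point \<alpha> x a) (xz_point \<alpha> 0 0)
       < ka_dist \<kappa> \<alpha> (xz_point \<alpha> x a) (xz_point \<alpha> x' a')"
proof -
  have "ka_dist \<kappa> \<alpha> (xz_point \<alpha> x a) (xz_point \<alpha> 0 0) \<le> (\<kappa> + 1) * x + a"
    using ka_dist_xz_point_bounds(2)[OF assms(1,2), where x=x and a=a and x'=0 and a'=0]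
      assms(3,5) by simp
  also have "\<dots> \<le> \<kappa> + 1 + a" using assms(1,4) by simp
  also have "\<dots> < a' - a" using assms(6) by simp
  also have "\<dots> \<le> sqrt \<bar>a'^2 - a^2\<bar>"
    using sqrt_diff_squares_bounds(1)[of a a'] assms by simp
  also have "\<dots> \<le> ka_dist \<kappa> \<alpha> (xz_point \<alpha> x a) (xz_point \<alpha> x' a')"
    using ka_dist_xz_point_bounds(1)[OF assms(1,2), where x=x and a=a and x'=x' and a'=a']
      mult_nonneg_nonneg[OF assms(1) abs_ge_zero[of "x' - x"]] by linarith
  finally show ?thesis .
qed

lemma lower_centre_outside:
  assumes "\<kappa> > 0" "\<alpha> > 0" "0 \<le> x'" "(2*\<kappa> + 1) * x' \<le> \<kappa> * x / 2"
    and "0 \<le> a" "a < a'" "2 * a^2 < \<kappa> * x * a'"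
  shows "ka_dist \<kappa> \<alpha> (xz_point \<alpha> x' a') (xz_point \<alpha> 0 0)
       < ka_dist \<kappa> \<alpha> (xz_point \<alpha> x' a') (xz_point \<alpha> x a)"
proof -
  define w where "w = sqrt (a'^2 - a^2)"
  have "a' * (a' - w) \<le> a^2"
    using sqrt_diff_squares_bounds(2)[of a a'] assms(5,6) unfolding w_def by simp
  then have "a' * (2 * (a' - w)) < a' * (\<kappa> * x)"
    using assms(7) by (simp only: mult.left_commute[of a' 2] mult.commute[of _ a'])
  then have gap: "2 * (a' - w) < \<kappa> * x" using assms(5,6) by (simp add: mult_less_cancel_left)
  have "ka_dist \<kappa> \<alpha> (xz_point \<alpha> x' a') (xz_point \<alpha> 0 0) \<le> (\<kappa> + 1) * x' + a'"
    using ka_dist_xz_point_bounds(2)[where x=x' and a=a' and x'=0 and a'=0] assms by simp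
  also have "\<dots> < \<kappa> * (x - x') + w" using gap assms(4) by (simp add: algebra_simps)
  also have "\<dots> \<le> \<kappa> * \<bar>x - x'\<bar> + sqrt \<bar>a^2 - a'^2\<bar>"
    using assms(1,5,6) by (simp add: w_def abs_minus_commute mult_left_mono)
  also have "\<dots> \<le> ka_dist \<kappa> \<alpha> (xz_point \<alpha> x' a') (xz_point \<alpha> x a)"
    using ka_dist_xz_point_bounds(1)[where x=x' and a=a' and x'=x and a'=a] assms(1,2) by simp
  finally show ?thesis .
qed

(* The centres: x_i = shrink^i and heights a_i = height i, where each height
   is chosen large enough for both separation lemmas against all later centres. *)
definition shrink :: "real \<Rightarrow> real" where
  "shrink \<kappa> = \<kappa> / (2 * (2*\<kappa> + 1))"

fun height :: "real \<Rightarrow> nat \<Rightarrow> real" where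
  "height \<kappa> 0 = 1"
| "height \<kappa> (Suc i) = 2 * (height \<kappa> i)^2 / (\<kappa> * shrink \<kappa> ^ i) + 2 * height \<kappa> i + \<kappa> + 2"

lemma shrink_bounds:
  assumes "\<kappa> > 0"
  shows "0 < shrink \<kappa>" "shrink \<kappa> \<le> 1" "(2*\<kappa> + 1) * shrink \<kappa> = \<kappa> / 2"
  using assms by (auto simp: shrink_def field_simps)

(* Horizontal condition of lower_centre_outside for every later index. *)
lemma shrink_gap:
  assumes "\<kappa> > 0" "i < j"
  shows "(2*\<kappa> + 1) * shrink \<kappa> ^ j \<le> \<kappa> * shrink \<kappa> ^ i / 2"
proof -
  have "shrink \<kappa> ^ j \<le> shrink \<kappa> ^ Suc i"
    using assms shrink_bounds[OF assms(1)] by (intro power_decreasing) auto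
  then have "(2*\<kappa> + 1) * shrink \<kappa> ^ j \<le> (2*\<kappa> + 1) * shrink \<kappa> * shrink \<kappa> ^ i"
    using assms(1) by (simp add: mult.assoc)
  then show ?thesis using shrink_bounds(3)[OF assms(1)] by simp
qed

lemma height_pos: "\<kappa> > 0 \<Longrightarrow> 0 < height \<kappa> i"
proof (induction i)
  case 0
  then show ?case by simp
next
  case (Suc i)
  have "0 \<le> 2 * (height \<kappa> i)^2 / (\<kappa> * shrink \<kappa> ^ i)"
    using Suc.prems shrink_bounds(1)[OF Suc.prems] by simp
  then show ?case using Suc by simp
qed

(* Vertical conditions of both separation lemmas for every later index. *)
lemma height_gap:
  assumes "\<kappa> > 0" "i < j"
  shows "2 * height \<kappa> i + \<kappa> + 1 < height \<kappa> j"
    and "2 * (height \<kappa> i)^2 < \<kappa> * shrink \<kappa> ^ i * height \<kappa> j"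
proof -
  let ?h = "height \<kappa>" and ?x = "\<kappa> * shrink \<kappa> ^ i"
  have x: "?x > 0" using assms(1) shrink_bounds(1)[OF assms(1)] by simp
  have q: "0 \<le> 2 * (?h i)^2 / ?x" using x by simp
  have step: "?h n \<le> ?h (Suc n)" for n
  proof -
    have "0 \<le> 2 * (?h n)^2 / (\<kappa> * shrink \<kappa> ^ n)"
      using assms(1) shrink_bounds(1)[OF assms(1)] by simp
    then show ?thesis using height_pos[OF assms(1), of n] assms(1) by simp
  qed
  have "?h (Suc i) \<le> ?h j" using assms(2) by (intro lift_Suc_mono_le[of ?h, OF step]) simp
  then have above: "2 * (?h i)^2 / ?x + 2 * ?h i + \<kappa> + 2 \<le> ?h j" by simp
  then show "2 * ?h i + \<kappa> + 1 < ?h j" using q by linarith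
  have "2 * (?h i)^2 / ?x < ?h j" using above height_pos[OF assms(1), of i] assms(1) by linarith
  then show "2 * (?h i)^2 < ?x * ?h j" using x by (simp add: divide_less_eq mult.commute)
qed

lemma separated_centres:
  assumes "\<kappa> > 0" "\<alpha> > 0" "i \<noteq> j"
  defines "c \<equiv> \<lambda>n. xz_point \<alpha> (shrink \<kappa> ^ n) (height \<kappa> n)"
  shows "ka_dist \<kappa> \<alpha> (c i) (xz_point \<alpha> 0 0) < ka_dist \<kappa> \<alpha> (c i) (c j)"
proof (cases "i < j")
  case True
  have "shrink \<kappa> ^ i \<le> 1" using shrink_bounds[OF assms(1)] by (simp add: power_le_one)
  then show ?thesis unfolding c_def
    using assms(1,2) height_gap(1)[OF assms(1) True] height_pos[OF assms(1), of i]
      shrink_bounds(1)[OF assms(1)]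
    by (intro higher_centre_outside) auto
next
  case False
  then have ji: "j < i" using assms(3) by simp
  have "height \<kappa> j < height \<kappa> i" using height_gap(1)[OF assms(1) ji] height_pos[OF assms(1), of j]
      assms(1) by linarith
  then show ?thesis unfolding c_def
    using assms(1,2) height_gap(2)[OF assms(1) ji] shrink_gap[OF assms(1) ji]
      height_pos[OF assms(1), of j] shrink_bounds(1)[OF assms(1)]
    by (intro lower_centre_outside) auto
qed

theorem mainTheorem8:
  fixes \<kappa> \<alpha> :: real
  assumes "\<kappa> > 0" and "0 < \<alpha>" and "\<alpha> \<le> 2"
  shows "\<not> BCP (ka_dist \<kappa> \<alpha>)"
proof -
  define c where "c n = xz_point \<alpha> (shrink \<kappa> ^ n) (height \<kappa> n)" for n
  define r where "r n = ka_dist \<kappa> \<alpha> (c n) (xz_point \<alpha> 0 0)" for n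
  have "r n > 0" for n
  proof -
    have "0 < \<kappa> * \<bar>0 - shrink \<kappa> ^ n\<bar>" using assms(1) shrink_bounds(1)[OF assms(1)] by simp
    also have "\<dots> \<le> r n"
      using ka_dist_xz_point_bounds(1)[OF less_imp_le[OF assms(1)] assms(2),
          where x = "shrink \<kappa> ^ n" and a = "height \<kappa> n" and x' = 0 and a' = 0]
        real_sqrt_ge_zero[OF abs_ge_zero[of "0^2 - (height \<kappa> n)^2"]]
      unfolding r_def c_def by linarith
    finally show ?thesis .
  qed
  moreover have "r i < ka_dist \<kappa> \<alpha> (c i) (c j)" if "i \<noteq> j" for i j
    using separated_centres[OF assms(1,2) that] unfolding r_def c_def by simp
  ultimately show ?thesis
    by (intro not_BCP_if_separated_balls[where r = r and p\<^sub>0 = "xz_point \<alpha> 0 0"])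
      (auto simp: r_def)
qed

end
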